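(* Let $G$ be an equimatchable graph and let $k,\ell$ be integers with $1\leq \ell<k\leq\nu(G)$. Then $I(G)^{[k]}:I(G)^{[\ell]}=I(G)^{[k]}$.
   Context: A finite simple graph is equimatchable if every maximal (by inclusion) matching is a maximum matching. Vertices are identified with variables of $S=K[x_1,\ldots,x_n]$ ($K$ a field), edges with degree-2 monomials. $I(G)^{[k]}$ is the ideal generated by all products $e_1\cdots e_k$ over $k$-matchings of $G$; $I(G)^{[1]}=I(G)$ is the edge ideal. $\nu(G)$ is the matching number. *)

theory Defs
  imports Main "HOL-Library.Poly_Mapping"
begin

type_synonym 'a mpoly = "(nat \<Rightarrow>\<^sub>0 nat) \<Rightarrow>\<^sub>0 'a"

definition poly_ring :: "nat set \<Rightarrow> ('a::comm_ring_1) mpoly set" where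
  "poly_ring V = {p :: 'a mpoly. \<forall>m \<in> Poly_Mapping.keys p. Poly_Mapping.keys m \<subseteq> V}"

definition ideal_gen :: "nat set \<Rightarrow> ('a::comm_ring_1) mpoly set \<Rightarrow> 'a mpoly set" where
  "ideal_gen V G = {(\<Sum>g\<in>F. r g * g) | F r. finite F \<and> F \<subseteq> G \<and> (\<forall>g\<in>F. r g \<in> poly_ring V)}"

definition colon_ideal :: "nat set \<Rightarrow> ('a::comm_ring_1) mpoly set \<Rightarrow> 'a mpoly set \<Rightarrow> 'a mpoly set" where
  "colon_ideal V I J = {f \<in> poly_ring V. \<forall>g\<in>J. f * g \<in> I}"

definition simple_graph :: "nat \<Rightarrow> nat set set \<Rightarrow> bool" where
  "simple_graph n E \<longleftrightarrow> (\<forall>e\<in>E. card e = 2 \<and> e \<subseteq> {1..n})"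

definition matching :: "nat set set \<Rightarrow> nat set set \<Rightarrow> bool" where
  "matching E M \<longleftrightarrow> M \<subseteq> E \<and> (\<forall>e\<in>M. \<forall>e'\<in>M. e \<noteq> e' \<longrightarrow> e \<inter> e' = {})"

definition maximal_matching :: "nat set set \<Rightarrow> nat set set \<Rightarrow> bool" where
  "maximal_matching E M \<longleftrightarrow> matching E M \<and> (\<forall>M'. matching E M' \<and> M \<subseteq> M' \<longrightarrow> M' = M)"

definition matching_number :: "nat set set \<Rightarrow> nat" where
  "matching_number E = Max {card M | M. matching E M}"

definition maximum_matching :: "nat set set \<Rightarrow> nat set set \<Rightarrow> bool" where
  "maximum_matching E M \<longleftrightarrow> matching E M \<and> card M = matching_number E"

definition equimatchable :: "nat set set \<Rightarrow> bool" where
  "equimatchable E \<longleftrightarrow> (\<forall>M. maximal_matching E M \<longrightarrow> maximum_matching E M)"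

text \<open>The degree-2 monomial x_i x_j of an edge {i,j}.\<close>
definition edge_mono :: "nat set \<Rightarrow> ('a::comm_ring_1) mpoly" where
  "edge_mono e = Poly_Mapping.single (\<Sum>i\<in>e. Poly_Mapping.single i 1) 1"

text \<open>I(G)^[k]: generated by products e_1...e_k over k-matchings.\<close>
definition sqf_power :: "nat set \<Rightarrow> nat set set \<Rightarrow> nat \<Rightarrow> ('a::comm_ring_1) mpoly set" where
  "sqf_power V E k = ideal_gen V {(\<Prod>e\<in>M. edge_mono e) | M. matching E M \<and> card M = k}"

end

theory Submission
  imports Defs
begin

text \<open>A polynomial lies in a monomial ideal iff each of its terms is divisible by a generator, so
  \<open>x\<^sup>m\<close> lies in \<open>I(G)^[k] : I(G)^[l]\<close> iff for every \<open>l\<close>-matching \<open>N\<close> some \<open>k\<close>-matching \<open>P\<close>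
  has its vertices in \<open>S \<union> V(N)\<close>, where \<open>S\<close> is the support of \<open>m\<close>. Take \<open>N\<close> with the
  most vertices in \<open>S\<close>. Some \<open>l\<close> edges of \<open>P\<close> carry at least an \<open>l/k\<close> share of the vertices of
  \<open>P\<close> in \<open>S\<close>, but cannot beat \<open>N\<close>; together with \<open>|V(P) - S| \<le> |V(N) - S|\<close> this forces
  \<open>V(P) \<subseteq> S\<close>, i.e. \<open>x\<^sub>P\<close> divides \<open>x\<^sup>m\<close>.\<close>

section \<open>Polynomial rings and generated ideals\<close>

lemma keys_add_nat: "Poly_Mapping.keys (a + b :: nat \<Rightarrow>\<^sub>0 nat) = Poly_Mapping.keys a \<union> Poly_Mapping.keys b"
  by (auto simp: in_keys_iff lookup_add)

lemma single_mem_poly_ring: "Poly_Mapping.keys t \<subseteq> V \<Longrightarrow> Poly_Mapping.single t a \<in> poly_ring V"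
  unfolding poly_ring_def by auto

lemma poly_ring_zero: "0 \<in> poly_ring V"
  unfolding poly_ring_def by simp

lemma poly_ring_one: "1 \<in> poly_ring V"
  unfolding poly_ring_def by simp

lemma poly_ring_add: "p \<in> poly_ring V \<Longrightarrow> q \<in> poly_ring V \<Longrightarrow> p + q \<in> poly_ring V"
  using keys_add[of p q] unfolding poly_ring_def by blast

lemma poly_ring_mult:
  assumes "p \<in> poly_ring V" "q \<in> poly_ring V"
  shows "p * q \<in> poly_ring V"
  unfolding poly_ring_def
proof (intro CollectI ballI)
  fix m assume "m \<in> Poly_Mapping.keys (p * q)"
  then obtain a b where "m = a + b" "a \<in> Poly_Mapping.keys p" "b \<in> Poly_Mapping.keys q"
    using keys_mult by blast
  then show "Poly_Mapping.keys m \<subseteq> V"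
    using assms keys_add_nat unfolding poly_ring_def by blast
qed

lemma poly_ring_sum: "(\<And>x. x \<in> A \<Longrightarrow> f x \<in> poly_ring V) \<Longrightarrow> sum f A \<in> poly_ring V"
  using keys_sum[of f A] unfolding poly_ring_def by blast

lemma poly_ring_prod: "(\<And>x. x \<in> A \<Longrightarrow> f x \<in> poly_ring V) \<Longrightarrow> prod f A \<in> poly_ring V"
  by (induction A rule: infinite_finite_induct) (auto intro: poly_ring_one poly_ring_mult)

lemma ideal_gen_subset_poly_ring:
  assumes "G \<subseteq> poly_ring V"
  shows "ideal_gen V G \<subseteq> poly_ring V"
  using assms unfolding ideal_gen_def by (auto intro!: poly_ring_sum poly_ring_mult)

lemma ideal_gen_mult_right:
  assumes "p \<in> ideal_gen V G" "q \<in> poly_ring V"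
  shows "p * q \<in> ideal_gen V G"
proof -
  obtain F r where p: "p = (\<Sum>g\<in>F. r g * g)" "finite F" "F \<subseteq> G" "\<forall>g\<in>F. r g \<in> poly_ring V"
    using assms(1) unfolding ideal_gen_def by blast
  have "p * q = (\<Sum>g\<in>F. (r g * q) * g)"
    unfolding p(1) sum_distrib_right by (simp add: ac_simps)
  moreover have "\<forall>g\<in>F. r g * q \<in> poly_ring V" using p(4) assms(2) poly_ring_mult by blast
  ultimately show ?thesis
    using p(2,3) unfolding ideal_gen_def by (intro CollectI exI[of _ F] exI[of _ "\<lambda>g. r g * q"]) simp
qed

lemma ideal_gen_subset_colon_ideal:
  assumes "G \<subseteq> poly_ring V" "J \<subseteq> poly_ring V"
  shows "ideal_gen V G \<subseteq> colon_ideal V (ideal_gen V G) J"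
proof
  fix f assume f: "f \<in> ideal_gen V G"
  have "f \<in> poly_ring V" using ideal_gen_subset_poly_ring[OF assms(1)] f by blast
  moreover have "\<forall>g\<in>J. f * g \<in> ideal_gen V G" using f assms(2) ideal_gen_mult_right by blast
  ultimately show "f \<in> colon_ideal V (ideal_gen V G) J" unfolding colon_ideal_def by blast
qed

lemma mult_mem_ideal_gen: "g \<in> G \<Longrightarrow> r \<in> poly_ring V \<Longrightarrow> r * g \<in> ideal_gen V G"
  unfolding ideal_gen_def by (rule CollectI, rule exI[of _ "{g}"], rule exI[of _ "\<lambda>_. r"]) auto

lemma ideal_gen_zero: "0 \<in> ideal_gen V G"
  unfolding ideal_gen_def by (rule CollectI, rule exI[of _ "{}"]) auto

lemma ideal_gen_add:
  assumes "p \<in> ideal_gen V G" "q \<in> ideal_gen V G"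
  shows "p + q \<in> ideal_gen V G"
proof -
  obtain F1 r1 where p: "p = (\<Sum>g\<in>F1. r1 g * g)" "finite F1" "F1 \<subseteq> G" "\<forall>g\<in>F1. r1 g \<in> poly_ring V"
    using assms(1) unfolding ideal_gen_def by blast
  obtain F2 r2 where q: "q = (\<Sum>g\<in>F2. r2 g * g)" "finite F2" "F2 \<subseteq> G" "\<forall>g\<in>F2. r2 g \<in> poly_ring V"
    using assms(2) unfolding ideal_gen_def by blast
  define r where "r g = (if g \<in> F1 then r1 g else 0) + (if g \<in> F2 then r2 g else 0)" for g
  have "\<forall>g\<in>F1 \<union> F2. r g \<in> poly_ring V"
    using p(4) q(4) unfolding r_def by (auto intro!: poly_ring_add poly_ring_zero)
  moreover have "(\<Sum>g\<in>F1 \<union> F2. r g * g)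
      = (\<Sum>g\<in>F1 \<union> F2. if g \<in> F1 then r1 g * g else 0) + (\<Sum>g\<in>F1 \<union> F2. if g \<in> F2 then r2 g * g else 0)"
    unfolding sum.distrib[symmetric] by (rule sum.cong) (auto simp: r_def distrib_right)
  then have "p + q = (\<Sum>g\<in>F1 \<union> F2. r g * g)"
    using p(1,2) q(1,2) by (simp add: sum.If_cases Int_absorb1)
  ultimately show ?thesis unfolding ideal_gen_def using p(2,3) q(2,3) by blast
qed

lemma ideal_gen_sum: "finite A \<Longrightarrow> (\<And>x. x \<in> A \<Longrightarrow> f x \<in> ideal_gen V G) \<Longrightarrow> sum f A \<in> ideal_gen V G"
  by (induction A rule: finite_induct) (auto intro: ideal_gen_zero ideal_gen_add)

section \<open>Monomial ideals\<close>

definition monomial :: "(nat \<Rightarrow>\<^sub>0 nat) \<Rightarrow> ('a::comm_ring_1) mpoly" where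
  "monomial t = Poly_Mapping.single t 1"

lemma poly_mapping_sum_single:
  "p = (\<Sum>m\<in>Poly_Mapping.keys p. Poly_Mapping.single m (Poly_Mapping.lookup p m))"
  by (rule poly_mapping_eqI) (auto simp: lookup_sum lookup_single when_def in_keys_iff)

lemma lookup_mult_monomial:
  "Poly_Mapping.lookup (p * monomial t) (m + t) = Poly_Mapping.lookup p m"
proof -
  have "p * monomial t
      = (\<Sum>a\<in>Poly_Mapping.keys p. Poly_Mapping.single (a + t) (Poly_Mapping.lookup p a))"
    by (subst poly_mapping_sum_single) (simp add: monomial_def sum_distrib_right mult_single)
  then show ?thesis by (auto simp: lookup_sum lookup_single when_def in_keys_iff)
qed

lemma keys_monomial_ideal:
  assumes "p \<in> ideal_gen V (monomial ` T)" "m \<in> Poly_Mapping.keys p"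
  shows "\<exists>t\<in>T. \<exists>c. m = c + t"
proof -
  obtain F r where p: "p = (\<Sum>g\<in>F. r g * g)" and F: "F \<subseteq> monomial ` T"
    using assms(1) unfolding ideal_gen_def by blast
  obtain g where g: "g \<in> F" "m \<in> Poly_Mapping.keys (r g * g)"
    using keys_sum[of "\<lambda>g. r g * g" F] assms(2) unfolding p by blast
  obtain t where t: "t \<in> T" "g = monomial t" using F g(1) by blast
  obtain c b where "m = c + b" "b \<in> Poly_Mapping.keys (monomial t :: 'a mpoly)"
    using keys_mult[of "r g" "monomial t"] g(2) t(2) by blast
  then show ?thesis using t(1) unfolding monomial_def by auto
qed

lemma mem_monomial_idealI:
  assumes "p \<in> poly_ring V" "\<forall>m\<in>Poly_Mapping.keys p. \<exists>t\<in>T. \<exists>c. m = c + t"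
  shows "p \<in> ideal_gen V (monomial ` T :: ('a::comm_ring_1) mpoly set)"
proof (subst poly_mapping_sum_single, rule ideal_gen_sum)
  fix m assume m: "m \<in> Poly_Mapping.keys p"
  obtain t c where t: "t \<in> T" "m = c + t" using assms(2) m by blast
  have "Poly_Mapping.keys c \<subseteq> V"
    using assms(1) m t(2) keys_add_nat unfolding poly_ring_def by blast
  then have "Poly_Mapping.single c (Poly_Mapping.lookup p m) * monomial t \<in> ideal_gen V (monomial ` T)"
    using t(1) by (intro mult_mem_ideal_gen single_mem_poly_ring) auto
  then show "Poly_Mapping.single m (Poly_Mapping.lookup p m) \<in> ideal_gen V (monomial ` T)"
    unfolding monomial_def t(2) by (simp add: mult_single)
qed simp

lemma colon_monomial_ideal_keys:
  assumes "f \<in> colon_ideal V (ideal_gen V (monomial ` A)) (ideal_gen V (monomial ` B))"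
    and "m \<in> Poly_Mapping.keys f" "t \<in> B"
  shows "\<exists>s\<in>A. \<exists>c. m + t = c + s"
proof -
  have "1 * monomial t \<in> ideal_gen V (monomial ` B :: 'a mpoly set)"
    using \<open>t \<in> B\<close> by (intro mult_mem_ideal_gen poly_ring_one) auto
  then have "f * monomial t \<in> ideal_gen V (monomial ` A)"
    using assms(1) unfolding colon_ideal_def by simp
  moreover have "m + t \<in> Poly_Mapping.keys (f * monomial t)"
    using assms(2) by (simp add: lookup_mult_monomial in_keys_iff)
  ultimately show ?thesis by (rule keys_monomial_ideal)
qed

section \<open>Matchings covering a vertex set\<close>

lemma matching_subset: "matching E P \<Longrightarrow> Q \<subseteq> P \<Longrightarrow> matching E Q"
  unfolding matching_def by blast

lemma finite_matching: "finite E \<Longrightarrow> matching E M \<Longrightarrow> finite M"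
  unfolding matching_def using finite_subset by blast

lemma finite_matching_edge: "matching E M \<Longrightarrow> \<forall>e\<in>E. card e = 2 \<Longrightarrow> e \<in> M \<Longrightarrow> finite e"
  unfolding matching_def by (metis card.infinite subsetD zero_neq_numeral)

lemma finite_Union_matching:
  "finite E \<Longrightarrow> \<forall>e\<in>E. card e = 2 \<Longrightarrow> matching E M \<Longrightarrow> finite (\<Union>M)"
  using finite_matching finite_matching_edge by blast

lemma card_Union_matching_Int:
  assumes "matching E M" "finite M" "\<forall>e\<in>E. card e = 2"
  shows "card (\<Union>M \<inter> S) = (\<Sum>e\<in>M. card (e \<inter> S))"
proof -
  have "\<Union>M \<inter> S = (\<Union>e\<in>M. e \<inter> S)" by blast
  also have "card \<dots> = (\<Sum>e\<in>M. card (e \<inter> S))"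
  proof (rule card_UN_disjoint[OF assms(2)])
    show "\<forall>e\<in>M. finite (e \<inter> S)" using finite_matching_edge[OF assms(1,3)] by blast
    show "\<forall>e\<in>M. \<forall>e'\<in>M. e \<noteq> e' \<longrightarrow> e \<inter> S \<inter> (e' \<inter> S) = {}"
      using assms(1) unfolding matching_def by blast
  qed
  finally show ?thesis .
qed

lemma card_Union_matching:
  assumes "matching E M" "finite M" "\<forall>e\<in>E. card e = 2"
  shows "card (\<Union>M) = 2 * card M"
proof -
  have "card (\<Union>M) = (\<Sum>e\<in>M. card e)" using card_Union_matching_Int[OF assms, of UNIV] by simp
  also have "\<dots> = (\<Sum>e\<in>M. 2)" using assms(1,3) unfolding matching_def by (intro sum.cong) auto
  finally show ?thesis by simp
qed

lemma exists_matching_of_card: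
  assumes "finite E" "l \<le> matching_number E"
  shows "\<exists>N. matching E N \<and> card N = l"
proof -
  have "finite {M. matching E M}"
    using assms(1) unfolding matching_def by (simp add: finite_subset)
  moreover have "matching E {}" unfolding matching_def by simp
  ultimately have "matching_number E \<in> {card M | M. matching E M}"
    unfolding matching_number_def by (intro Max_in) auto
  then obtain M where M: "matching E M" "l \<le> card M" using assms(2) by auto
  then obtain N where "N \<subseteq> M" "card N = l" by (meson obtain_subset_with_card_n)
  then show ?thesis using matching_subset[OF M(1)] by blast
qed

lemma add_le_Suc_mult_if_average_le:
  fixes l n a s t :: nat
  assumes "l \<le> n" "n * a \<le> s" "l * s \<le> n * t"
  shows "l * (a + s) \<le> Suc n * t"
proof (cases "n = 0")
  case False
  have "n * (l * (a + s)) = l * (n * a) + n * (l * s)" by (simp add: algebra_simps)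
  also have "\<dots> \<le> Suc n * (l * s)" using assms(2) by simp
  also have "\<dots> \<le> Suc n * (n * t)" using assms(3) by (rule mult_le_mono2)
  also have "\<dots> = n * (Suc n * t)" by (simp add: algebra_simps)
  finally show ?thesis using False by simp
qed (use assms in simp)

text \<open>The heaviest \<open>l\<close> elements of \<open>P\<close> carry at least an \<open>l / card P\<close> share of the total
  weight: removing a lightest element does not lower the average.\<close>
lemma exists_subset_card_weight_ge:
  fixes w :: "'b \<Rightarrow> nat"
  assumes "finite P" "l \<le> card P"
  shows "\<exists>Q\<subseteq>P. card Q = l \<and> l * sum w P \<le> card P * sum w Q"
  using assms
proof (induction "card P - l" arbitrary: P)
  case 0
  then show ?case by auto
next
  case (Suc d)
  then have "P \<noteq> {}" by auto
  obtain x where x: "x \<in> P" "\<And>y. y \<in> P \<Longrightarrow> w x \<le> w y"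
    using arg_min_if_finite[OF \<open>finite P\<close> \<open>P \<noteq> {}\<close>, of w] by (metis not_less)
  define P' where "P' = P - {x}"
  have card_P: "card P = Suc (card P')"
    using card_Suc_Diff1[OF Suc.prems(1) x(1)] unfolding P'_def by simp
  have sum_P: "sum w P = w x + sum w P'"
    using Suc.prems(1) x(1) unfolding P'_def by (simp add: sum.remove)
  have "l \<le> card P'" "d = card P' - l" using Suc.hyps(2) card_P by linarith+
  then obtain Q where Q: "Q \<subseteq> P'" "card Q = l" "l * sum w P' \<le> card P' * sum w Q"
    using Suc.hyps(1)[of P'] Suc.prems(1) unfolding P'_def by blast
  moreover have "card P' * w x \<le> sum w P'"
    using sum_bounded_below[of P' "w x" w] x(2) unfolding P'_def by auto
  ultimately have "l * sum w P \<le> card P * sum w Q"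
    using add_le_Suc_mult_if_average_le \<open>l \<le> card P'\<close> sum_P card_P by metis
  then show ?case using Q unfolding P'_def by auto
qed

text \<open>With \<open>p\<close>, \<open>c\<close>, \<open>q\<close> the numbers of vertices in \<open>S\<close> of \<open>P\<close>, \<open>N\<close> and the heaviest \<open>l\<close> edges of
  \<open>P\<close>: the inequalities below force \<open>P\<close> to lie entirely in \<open>S\<close>.\<close>
lemma cover_counting_eq_double:
  fixes p c q k l :: nat
  assumes "p \<le> 2 * k" "c \<le> 2 * l" "2 * k - p \<le> 2 * l - c" "l * p \<le> k * q" "q \<le> c" "l < k"
  shows "p = 2 * k"
proof -
  obtain d where k: "k = l + d" and "0 < d" using \<open>l < k\<close> less_imp_add_positive by blast
  have "2 * k + c \<le> 2 * l + p" using assms(1-3) by linarith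
  then have "l * (2 * k + c) \<le> l * (2 * l + p)" by (rule mult_le_mono2)
  also have "\<dots> \<le> 2 * l * l + k * c"
  proof -
    have "l * p \<le> k * c" using assms(4,5) by (meson le_trans mult_le_mono2)
    then show ?thesis by (simp add: algebra_simps)
  qed
  finally have "d * (2 * l) \<le> d * c" unfolding k by (simp add: algebra_simps)
  then have "2 * l \<le> c" using \<open>0 < d\<close> by simp
  then show ?thesis using assms(1-3) by linarith
qed

lemma exists_matching_Union_subset:
  assumes finE: "finite E" and two: "\<forall>e\<in>E. card e = 2"
    and N0: "matching E N0" "card N0 = l" and "l < k"
    and extend: "\<And>N. matching E N \<Longrightarrow> card N = l \<Longrightarrow>
                   \<exists>P. matching E P \<and> card P = k \<and> \<Union>P \<subseteq> S \<union> \<Union>N"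
  shows "\<exists>M. matching E M \<and> card M = k \<and> \<Union>M \<subseteq> S"
proof -
  define cover where "cover M = card (\<Union>M \<inter> S)" for M :: "nat set set"
  have fin: "finite M" "finite (\<Union>M)" if "matching E M" for M
    using finite_matching[OF finE that] finite_Union_matching[OF finE two that] by auto
  have cover_le: "cover M \<le> 2 * card M" if "matching E M" for M
    using card_mono[OF fin(2)[OF that], of "\<Union>M \<inter> S"] card_Union_matching[OF that fin(1)[OF that] two]
    unfolding cover_def by auto
  have outside: "card (\<Union>M - S) = 2 * card M - cover M" if "matching E M" for M
    using card_Union_matching[OF that fin(1)[OF that] two] card_Int_Diff[OF fin(2)[OF that], of S]
    unfolding cover_def by simp
  obtain N where N: "matching E N" "card N = l"
    and N_max: "\<And>N'. matching E N' \<Longrightarrow> card N' = l \<Longrightarrow> cover N' \<le> cover N"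
    using ex_has_greatest_nat[of "\<lambda>N. matching E N \<and> card N = l" N0 cover "2 * l + 1"] N0 cover_le
    by fastforce
  obtain P where P: "matching E P" "card P = k" and P_sub: "\<Union>P \<subseteq> S \<union> \<Union>N"
    using extend[OF N] by blast
  have "\<Union>P - S \<subseteq> \<Union>N - S" using P_sub by blast
  then have "card (\<Union>P - S) \<le> card (\<Union>N - S)"
    by (rule card_mono[rotated]) (use fin(2)[OF N(1)] in blast)
  then have "2 * k - cover P \<le> 2 * l - cover N"
    using outside[OF P(1)] outside[OF N(1)] P(2) N(2) by simp
  moreover obtain Q where Q: "Q \<subseteq> P" "card Q = l" and
    "l * (\<Sum>e\<in>P. card (e \<inter> S)) \<le> k * (\<Sum>e\<in>Q. card (e \<inter> S))"
    using exists_subset_card_weight_ge[OF fin(1)[OF P(1)], of l] \<open>l < k\<close> P(2) by auto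
  moreover have "matching E Q" using matching_subset[OF P(1) Q(1)] .
  then have "cover Q = (\<Sum>e\<in>Q. card (e \<inter> S))" "cover Q \<le> cover N"
    using card_Union_matching_Int[OF _ fin(1) two] N_max Q(2) unfolding cover_def by auto
  moreover have "cover P = (\<Sum>e\<in>P. card (e \<inter> S))"
    using card_Union_matching_Int[OF P(1) fin(1)[OF P(1)] two] unfolding cover_def .
  ultimately have "cover P = 2 * k"
    using cover_counting_eq_double cover_le[OF P(1)] cover_le[OF N(1)] P(2) N(2) \<open>l < k\<close> by metis
  then have "\<Union>P \<inter> S = \<Union>P"
    using card_Union_matching[OF P(1) fin(1)[OF P(1)] two] P(2) fin(2)[OF P(1)]
    unfolding cover_def by (metis Int_lower1 card_subset_eq)
  then show ?thesis using P by blast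
qed

section \<open>Squarefree powers of the edge ideal\<close>

definition set_exponent :: "nat set \<Rightarrow> (nat \<Rightarrow>\<^sub>0 nat)" where
  "set_exponent A = (\<Sum>i\<in>A. Poly_Mapping.single i 1)"

lemma lookup_set_exponent:
  "finite A \<Longrightarrow> Poly_Mapping.lookup (set_exponent A) i = (if i \<in> A then 1 else 0)"
  unfolding set_exponent_def lookup_sum lookup_single when_def by simp

lemma keys_set_exponent: "finite A \<Longrightarrow> Poly_Mapping.keys (set_exponent A) = A"
  by (auto simp: in_keys_iff lookup_set_exponent split: if_splits)

lemma keys_set_exponent_subset: "Poly_Mapping.keys (set_exponent A) \<subseteq> A"
  unfolding set_exponent_def using keys_sum by fastforce

lemma set_exponent_dvd_iff:
  assumes "finite A"
  shows "(\<exists>c. m = c + set_exponent A) \<longleftrightarrow> A \<subseteq> Poly_Mapping.keys m"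
proof
  assume "\<exists>c. m = c + set_exponent A"
  then show "A \<subseteq> Poly_Mapping.keys m" using keys_add_nat keys_set_exponent[OF assms] by blast
next
  assume A: "A \<subseteq> Poly_Mapping.keys m"
  have "m = (m - set_exponent A) + set_exponent A"
    using A by (intro poly_mapping_eqI)
      (auto simp: lookup_add lookup_minus lookup_set_exponent[OF assms] in_keys_iff)
  then show "\<exists>c. m = c + set_exponent A" by blast
qed

lemma prod_monomial: "(\<Prod>x\<in>A. monomial (f x)) = (monomial (\<Sum>x\<in>A. f x) :: 'a::comm_ring_1 mpoly)"
  by (induction A rule: infinite_finite_induct) (simp_all add: monomial_def mult_single)

lemma prod_edge_mono_matching:
  assumes "matching E M" "\<forall>e\<in>E. card e = 2"
  shows "(\<Prod>e\<in>M. edge_mono e) = (monomial (set_exponent (\<Union>M)) :: 'a::comm_ring_1 mpoly)"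
proof -
  have "(\<Prod>e\<in>M. edge_mono e) = (\<Prod>e\<in>M. monomial (set_exponent e) :: 'a mpoly)"
    by (simp add: edge_mono_def monomial_def set_exponent_def)
  also have "\<dots> = monomial (\<Sum>e\<in>M. set_exponent e)" by (rule prod_monomial)
  also have "(\<Sum>e\<in>M. set_exponent e) = set_exponent (\<Union>M)"
    unfolding set_exponent_def using assms finite_matching_edge[OF assms] unfolding matching_def
    by (subst sum.Union_disjoint) auto
  finally show ?thesis .
qed

lemma sqf_power_eq_monomial_ideal:
  assumes "\<forall>e\<in>E. card e = 2"
  shows "sqf_power V E k
    = ideal_gen V (monomial ` {set_exponent (\<Union>M) | M. matching E M \<and> card M = k} :: 'a::comm_ring_1 mpoly set)"
proof -
  have "{\<Prod>e\<in>M. edge_mono e | M. matching E M \<and> card M = k}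
      = (\<lambda>M. monomial (set_exponent (\<Union>M)) :: 'a mpoly) ` {M. matching E M \<and> card M = k}"
    unfolding setcompr_eq_image using prod_edge_mono_matching[OF _ assms] by (intro image_cong) auto
  then show ?thesis unfolding sqf_power_def setcompr_eq_image image_image by simp
qed

lemma prod_edge_mono_mem_poly_ring:
  assumes "\<forall>e\<in>E. e \<subseteq> V" "matching E M"
  shows "(\<Prod>e\<in>M. edge_mono e) \<in> (poly_ring V :: 'a::comm_ring_1 mpoly set)"
proof (rule poly_ring_prod)
  fix e assume "e \<in> M"
  then show "edge_mono e \<in> (poly_ring V :: 'a mpoly set)"
    using assms keys_set_exponent_subset[of e] unfolding matching_def edge_mono_def set_exponent_def
    by (blast intro: single_mem_poly_ring)
qed

lemma sqf_power_subset_colon_ideal: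
  assumes "\<forall>e\<in>E. e \<subseteq> V"
  shows "sqf_power V E k \<subseteq> colon_ideal V (sqf_power V E k) (sqf_power V E l :: 'a::comm_ring_1 mpoly set)"
proof -
  have gens: "{\<Prod>e\<in>M. edge_mono e | M. matching E M \<and> card M = j} \<subseteq> (poly_ring V :: 'a mpoly set)" for j
    using prod_edge_mono_mem_poly_ring[OF assms] by blast
  show ?thesis
    unfolding sqf_power_def by (intro ideal_gen_subset_colon_ideal ideal_gen_subset_poly_ring gens)
qed

lemma colon_sqf_power_subset:
  assumes finE: "finite E" and two: "\<forall>e\<in>E. card e = 2"
    and "matching E N0" "card N0 = l" "l < k"
  shows "colon_ideal V (sqf_power V E k) (sqf_power V E l) \<subseteq> (sqf_power V E k :: 'a::comm_ring_1 mpoly set)"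
proof
  define T where "T j = {set_exponent (\<Union>M) | M. matching E M \<and> card M = j}" for j
  have sqf: "sqf_power V E j = ideal_gen V (monomial ` T j :: 'a mpoly set)" for j
    unfolding T_def using sqf_power_eq_monomial_ideal[OF two] .
  fix f :: "'a mpoly" assume f: "f \<in> colon_ideal V (sqf_power V E k) (sqf_power V E l)"
  have "\<exists>t\<in>T k. \<exists>c. m = c + t" if m: "m \<in> Poly_Mapping.keys f" for m
  proof -
    have "\<exists>P. matching E P \<and> card P = k \<and> \<Union>P \<subseteq> Poly_Mapping.keys m \<union> \<Union>N"
      if N: "matching E N" "card N = l" for N
    proof -
      have "set_exponent (\<Union>N) \<in> T l" unfolding T_def using N by blast
      then obtain s c where "s \<in> T k" and s: "m + set_exponent (\<Union>N) = c + s"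
        using colon_monomial_ideal_keys[OF f[unfolded sqf] m] by blast
      then obtain P where P: "matching E P" "card P = k" "s = set_exponent (\<Union>P)"
        unfolding T_def by blast
      have "\<Union>P \<subseteq> Poly_Mapping.keys (m + set_exponent (\<Union>N))"
        using s set_exponent_dvd_iff[OF finite_Union_matching[OF finE two P(1)]] P(3) by blast
      then show ?thesis
        using P keys_add_nat keys_set_exponent[OF finite_Union_matching[OF finE two N(1)]] by auto
    qed
    then obtain M where M: "matching E M" "card M = k" "\<Union>M \<subseteq> Poly_Mapping.keys m"
      using exists_matching_Union_subset[OF finE two assms(3-5)] by blast
    then have "set_exponent (\<Union>M) \<in> T k" unfolding T_def by blast
    then show ?thesis
      using M(3) set_exponent_dvd_iff[OF finite_Union_matching[OF finE two M(1)]] by blast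
  qed
  moreover have "f \<in> poly_ring V" using f unfolding colon_ideal_def by blast
  ultimately show "f \<in> sqf_power V E k" unfolding sqf by (blast intro: mem_monomial_idealI)
qed

theorem corollary6p6:
  fixes n k l :: nat and E :: "nat set set"
  assumes "simple_graph n E"
    and "equimatchable E"
    and "1 \<le> l" and "l < k" and "k \<le> matching_number E"
  shows "colon_ideal {1..n} (sqf_power {1..n} E k :: ('a::field) mpoly set)
           (sqf_power {1..n} E l) = sqf_power {1..n} E k"
proof
  have two: "\<forall>e\<in>E. card e = 2" and edges: "\<forall>e\<in>E. e \<subseteq> {1..n}"
    using assms(1) unfolding simple_graph_def by auto
  have "finite E" using edges by (intro finite_subset[of E "Pow {1..n}"]) auto
  obtain N where "matching E N" "card N = l"
    using exists_matching_of_card[OF \<open>finite E\<close>, of l] assms(4,5) by auto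
  then show "colon_ideal {1..n} (sqf_power {1..n} E k) (sqf_power {1..n} E l) \<subseteq> (sqf_power {1..n} E k :: 'a mpoly set)"
    using colon_sqf_power_subset[OF \<open>finite E\<close> two] \<open>l < k\<close> by blast
  show "sqf_power {1..n} E k \<subseteq> colon_ideal {1..n} (sqf_power {1..n} E k) (sqf_power {1..n} E l :: 'a mpoly set)"
    using sqf_power_subset_colon_ideal[OF edges] .
qed

end
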